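(* Let $(M,g)$ be a Lorentzian manifold and let $X$ be a null-connecting Jacobi field along a null geodesic segment $\gamma$ (defined on an interval containing $0$) with $X(0)$ timelike. Then $X$ has no zeros on $\gamma$.
   Context: A Jacobi field along a null geodesic is null-connecting if it arises as $X=\gamma_*\partial_\lambda$ from a differentiable one-parameter family $\gamma(\lambda,s)$ of affinely parameterised null geodesics $s\mapsto\gamma(\lambda,s)$. *)

theory Defs
  imports "HOL-Analysis.Analysis"
begin

fun pd :: "'a::euclidean_space list \<Rightarrow> ('a \<Rightarrow> real) \<Rightarrow> 'a \<Rightarrow> real" where
  "pd [] f = f"
| "pd (b # bs) f = (\<lambda>x. deriv (\<lambda>t. pd bs f (x + t *\<^sub>R b)) 0)"

definition smooth_map_on :: "'a::euclidean_space set \<Rightarrow> ('a \<Rightarrow> 'b::euclidean_space) \<Rightarrow> bool" where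
  "smooth_map_on S f \<longleftrightarrow> open S \<and>
     (\<forall>bs c. set bs \<subseteq> Basis \<and> c \<in> Basis \<longrightarrow>
        continuous_on S (pd bs (\<lambda>x. f x \<bullet> c)) \<and>
        (\<forall>b\<in>Basis. \<forall>x\<in>S. (\<lambda>t. pd bs (\<lambda>x. f x \<bullet> c) (x + t *\<^sub>R b)) differentiable (at 0)))"

type_synonym ('m, 'n) chart = "'m set \<times> ('m \<Rightarrow> real^'n)"

definition is_chart :: "('m::topological_space, 'n::finite) chart \<Rightarrow> bool" where
  "is_chart c \<longleftrightarrow> open (fst c) \<and> open (snd c ` fst c) \<and>
     homeomorphism (fst c) (snd c ` fst c) (snd c) (inv_into (fst c) (snd c))"

definition transition :: "('m, 'n) chart \<Rightarrow> ('m, 'n) chart \<Rightarrow> real^'n \<Rightarrow> real^'n" where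
  "transition c d = snd d \<circ> inv_into (fst c) (snd c)"

definition smooth_atlas :: "('m::topological_space, 'n::finite) chart set \<Rightarrow> bool" where
  "smooth_atlas A \<longleftrightarrow> (\<forall>c\<in>A. is_chart c) \<and> (\<Union>(fst ` A) = UNIV) \<and>
     (\<forall>c\<in>A. \<forall>d\<in>A. smooth_map_on (snd c ` (fst c \<inter> fst d)) (transition c d))"

definition lorentzian_form :: "real^'n^'n \<Rightarrow> bool" where
  "lorentzian_form g \<longleftrightarrow> transpose g = g \<and> det g \<noteq> 0 \<and>
     (\<exists>v. v \<bullet> (g *v v) < 0) \<and>
     (\<forall>S. subspace S \<and> (\<forall>v\<in>S. v \<noteq> 0 \<longrightarrow> v \<bullet> (g *v v) < 0) \<longrightarrow> dim S \<le> 1)"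

text \<open>G c x = matrix of the metric g_ij in chart c at coordinate point x.\<close>
definition lorentzian_metric ::
  "('m::topological_space, 'n::finite) chart set \<Rightarrow> (('m, 'n) chart \<Rightarrow> real^'n \<Rightarrow> real^'n^'n) \<Rightarrow> bool" where
  "lorentzian_metric A G \<longleftrightarrow>
     (\<forall>c\<in>A. smooth_map_on (snd c ` fst c) (G c) \<and> (\<forall>x\<in>snd c ` fst c. lorentzian_form (G c x))) \<and>
     (\<forall>c\<in>A. \<forall>d\<in>A. \<forall>x\<in>snd c ` (fst c \<inter> fst d).
        G c x = transpose (jacobian (transition c d) (at x)) ** G d (transition c d x)
                  ** jacobian (transition c d) (at x))"

definition lorentzian_manifold ::
  "('m::{t2_space, second_countable_topology}, 'n::finite) chart set \<Rightarrow> (('m, 'n) chart \<Rightarrow> real^'n \<Rightarrow> real^'n^'n) \<Rightarrow> bool" where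
  "lorentzian_manifold A G \<longleftrightarrow> CARD('n) \<ge> 2 \<and> smooth_atlas A \<and> lorentzian_metric A G"

definition christoffel :: "(real^'n \<Rightarrow> real^'n^'n) \<Rightarrow> real^'n \<Rightarrow> 'n::finite \<Rightarrow> 'n \<Rightarrow> 'n \<Rightarrow> real" where
  "christoffel g x k i j = (1/2) * (\<Sum>l\<in>UNIV. matrix_inv (g x) $ k $ l *
      (pd [axis i 1] (\<lambda>y. g y $ j $ l) x + pd [axis j 1] (\<lambda>y. g y $ i $ l) x
       - pd [axis l 1] (\<lambda>y. g y $ i $ j) x))"

definition coord_partial ::
  "('m, 'n::finite) chart \<Rightarrow> (real \<times> real \<Rightarrow> 'm) \<Rightarrow> (real \<times> real) list \<Rightarrow> real \<times> real \<Rightarrow> real^'n" where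
  "coord_partial c F bs p = (\<chi> k. pd bs (\<lambda>q. snd c (F q) $ k) p)"

definition smooth_family_on ::
  "('m::topological_space, 'n::finite) chart set \<Rightarrow> (real \<times> real) set \<Rightarrow> (real \<times> real \<Rightarrow> 'm) \<Rightarrow> bool" where
  "smooth_family_on A W F \<longleftrightarrow> open W \<and> continuous_on W F \<and>
     (\<forall>c\<in>A. smooth_map_on (W \<inter> F -` fst c) (snd c \<circ> F))"

definition null_geodesic_at ::
  "('m, 'n::finite) chart set \<Rightarrow> (('m, 'n) chart \<Rightarrow> real^'n \<Rightarrow> real^'n^'n) \<Rightarrow> (real \<times> real \<Rightarrow> 'm) \<Rightarrow> real \<times> real \<Rightarrow> bool" where
  "null_geodesic_at A G F p \<longleftrightarrow>
     (\<forall>c\<in>A. F p \<in> fst c \<longrightarrow>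
        (let v = coord_partial c F [(0,1)] p; a = coord_partial c F [(0,1),(0,1)] p;
             x = snd c (F p) in
         (\<forall>k. a $ k + (\<Sum>i\<in>UNIV. \<Sum>j\<in>UNIV. christoffel (G c) x k i j * v $ i * v $ j) = 0) \<and>
         v \<noteq> 0 \<and> v \<bullet> (G c x *v v) = 0))"

text \<open>The Jacobi field X = gamma_* d/d lambda at (0,s), in chart c.\<close>
definition jacobi_field_coord ::
  "('m, 'n::finite) chart \<Rightarrow> (real \<times> real \<Rightarrow> 'm) \<Rightarrow> real \<Rightarrow> real^'n" where
  "jacobi_field_coord c F s = coord_partial c F [(1,0)] (0, s)"

text \<open>X is null-connecting along the null geodesic segment s |-> F(0,s), s in I:
  F is a smooth family of affinely parametrised null geodesics s |-> F(lambda,s), s in I,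
  for lambda in an open interval J around 0 (smooth on an open neighbourhood W of J x I).\<close>
definition null_connecting_family ::
  "('m::topological_space, 'n::finite) chart set \<Rightarrow> (('m, 'n) chart \<Rightarrow> real^'n \<Rightarrow> real^'n^'n)
    \<Rightarrow> real set \<Rightarrow> real set \<Rightarrow> (real \<times> real \<Rightarrow> 'm) \<Rightarrow> bool" where
  "null_connecting_family A G J I F \<longleftrightarrow>
     open J \<and> is_interval J \<and> 0 \<in> J \<and>
     (\<exists>W. J \<times> I \<subseteq> W \<and> smooth_family_on A W F) \<and>
     (\<forall>l\<in>J. \<forall>s\<in>I. null_geodesic_at A G F (l, s))"

end

theory Submission
  imports Defs
begin

(*
  Write X = \<gamma>\<^sub>*\<partial>\<^sub>\<lambda> and T = \<gamma>\<^sub>*\<partial>\<^sub>s. Along the geodesic s \<mapsto> \<gamma>(0, s),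
    d/ds g(X, T) = g(\<nabla>\<^sub>T X, T) + g(X, \<nabla>\<^sub>T T) = g(\<nabla>\<^sub>X T, T) = 1/2 \<partial>\<^sub>\<lambda> g(T, T) = 0,
  since \<nabla>\<^sub>T T = 0 (geodesic equation), \<nabla>\<^sub>T X = \<nabla>\<^sub>X T (mixed partial derivatives commute)
  and g(T, T) vanishes identically (every curve of the family is null). In a chart this is a
  computation with Christoffel symbols; the pairing g(X, T) does not depend on the chart, so it
  is constant on the whole segment. At s = 0 it is nonzero, because in Lorentzian signature a
  timelike vector is never orthogonal to a nonzero null vector. Hence X never vanishes.
*)

section \<open>Differentiability from continuous partial derivatives\<close>

lemma line_increment_bound:
  fixes f :: "'a::real_normed_vector \<Rightarrow> real"
  assumes D: "\<And>u. u \<in> closed_segment 0 t \<Longrightarrow>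
      ((\<lambda>s. f (y + s *\<^sub>R b)) has_real_derivative D (y + u *\<^sub>R b)) (at u)"
    and B: "\<And>u. u \<in> closed_segment 0 t \<Longrightarrow> \<bar>D (y + u *\<^sub>R b) - c\<bar> \<le> e"
  shows "\<bar>f (y + t *\<^sub>R b) - f y - t * c\<bar> \<le> e * \<bar>t\<bar>"
proof -
  define \<psi> where "\<psi> u = f (y + u *\<^sub>R b) - u * c" for u
  have "norm (\<psi> t - \<psi> 0) \<le> e * norm (t - 0)"
  proof (rule field_differentiable_bound[OF convex_closed_segment])
    fix u assume "u \<in> closed_segment 0 t"
    then show "(\<psi> has_field_derivative D (y + u *\<^sub>R b) - c) (at u within closed_segment 0 t)"
      unfolding \<psi>_def by (auto intro!: derivative_eq_intros D[THEN has_field_derivative_at_within])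
  qed (use B in auto)
  then show ?thesis by (simp add: \<psi>_def)
qed

(* Split h = h' + t b with h' \<bullet> b = 0: the hypothesis controls h', the mean value theorem
   along the line through x + h' in direction b controls the rest. *)
lemma linearization_insert_coordinate:
  fixes f :: "'a::euclidean_space \<Rightarrow> real"
  assumes S: "open S" "x \<in> S"
    and D: "\<And>y u. y + u *\<^sub>R b \<in> S \<Longrightarrow>
      ((\<lambda>t. f (y + t *\<^sub>R b)) has_real_derivative Df b (y + u *\<^sub>R b)) (at u)"
    and "continuous (at x) (Df b)" and b: "b \<in> Basis" "b \<notin> B" and "B \<subseteq> Basis" and "e > 0"
    and "d1 > 0" and d1: "\<And>h. \<forall>c\<in>Basis - B. h \<bullet> c = 0 \<Longrightarrow> norm h < d1 \<Longrightarrow>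
      \<bar>f (x + h) - f x - (\<Sum>c\<in>B. (h \<bullet> c) * Df c x)\<bar> \<le> e/4 * norm h"
  shows "\<exists>d>0. \<forall>h. (\<forall>c\<in>Basis - insert b B. h \<bullet> c = 0) \<longrightarrow> norm h < d \<longrightarrow>
           \<bar>f (x + h) - f x - (\<Sum>c\<in>insert b B. (h \<bullet> c) * Df c x)\<bar> \<le> e * norm h"
proof -
  obtain d2 where "d2 > 0" and d2: "\<And>y. dist y x < d2 \<Longrightarrow> dist (Df b y) (Df b x) < e/2"
    using \<open>continuous (at x) (Df b)\<close> \<open>e > 0\<close> unfolding continuous_at_eps_delta
    by (meson half_gt_zero)
  obtain d3 where "d3 > 0" and d3: "ball x d3 \<subseteq> S" using S openE by blast
  define d where "d = min d1 (min d2 d3) / 3"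
  show ?thesis
  proof (intro exI[of _ d] conjI allI impI)
    show "d > 0" using \<open>d1 > 0\<close> \<open>d2 > 0\<close> \<open>d3 > 0\<close> by (simp add: d_def)
    fix h :: 'a
    assume supp: "\<forall>c\<in>Basis - insert b B. h \<bullet> c = 0" and "norm h < d"
    define t where "t = h \<bullet> b"
    define h' where "h' = h - t *\<^sub>R b"
    have t: "\<bar>t\<bar> \<le> norm h" unfolding t_def using Basis_le_norm b(1) by blast
    have "norm h' \<le> norm h + norm (t *\<^sub>R b)" unfolding h'_def by (rule norm_triangle_ineq4)
    with t b(1) have h': "norm h' \<le> 2 * norm h" by simp
    have h'_off_b: "h' \<bullet> c = h \<bullet> c" if "c \<in> Basis" "c \<noteq> b" for c
      using that b(1) by (simp add: h'_def inner_diff_left inner_not_same_Basis)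
    have "h' \<bullet> b = 0" using b(1) by (simp add: h'_def t_def inner_diff_left)
    then have "h' \<bullet> c = 0" if "c \<in> Basis - B" for c
      using that supp h'_off_b by (cases "c = b") simp_all
    moreover have "norm h' < d1"
    proof -
      have "3 * norm h < d1" using \<open>norm h < d\<close> by (simp add: d_def)
      then show ?thesis using h' norm_ge_zero[of h] by linarith
    qed
    ultimately have "\<bar>f (x + h') - f x - (\<Sum>c\<in>B. (h' \<bullet> c) * Df c x)\<bar> \<le> e/4 * norm h'"
      by (intro d1) auto
    moreover have "(\<Sum>c\<in>B. (h' \<bullet> c) * Df c x) = (\<Sum>c\<in>B. (h \<bullet> c) * Df c x)"
      using b(2) \<open>B \<subseteq> Basis\<close> h'_off_b by (intro sum.cong) auto
    moreover have "e/4 * norm h' \<le> e/2 * norm h" using h' \<open>e > 0\<close> by simp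
    ultimately have est_B: "\<bar>f (x + h') - f x - (\<Sum>c\<in>B. (h \<bullet> c) * Df c x)\<bar> \<le> e/2 * norm h"
      by linarith
    have near: "dist (x + h' + u *\<^sub>R b) x < min d2 d3" if "u \<in> closed_segment 0 t" for u
    proof -
      have "\<bar>u\<bar> \<le> \<bar>t\<bar>" using that by (auto simp: closed_segment_eq_real_ivl split: if_splits)
      then have "norm (h' + u *\<^sub>R b) \<le> 3 * norm h"
        using norm_triangle_ineq[of h' "u *\<^sub>R b"] h' t b(1) by simp
      then show ?thesis using \<open>norm h < d\<close> by (simp add: dist_norm d_def add.assoc)
    qed
    have split: "x + h = x + h' + t *\<^sub>R b" by (simp add: h'_def)
    have "\<bar>f (x + h) - f (x + h') - t * Df b x\<bar> \<le> e/2 * \<bar>t\<bar>"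
      unfolding split
    proof (rule line_increment_bound)
      fix u assume u: "u \<in> closed_segment 0 t"
      then have "x + h' + u *\<^sub>R b \<in> S" using near d3 by (auto simp: dist_commute)
      then show "((\<lambda>s. f (x + h' + s *\<^sub>R b)) has_real_derivative Df b (x + h' + u *\<^sub>R b)) (at u)"
        by (rule D)
      show "\<bar>Df b (x + h' + u *\<^sub>R b) - Df b x\<bar> \<le> e/2"
        using d2[of "x + h' + u *\<^sub>R b"] near[OF u] by (simp add: dist_real_def)
    qed
    moreover have "e/2 * \<bar>t\<bar> \<le> e/2 * norm h" using t \<open>e > 0\<close> by simp
    moreover have "(\<Sum>c\<in>insert b B. (h \<bullet> c) * Df c x) = t * Df b x + (\<Sum>c\<in>B. (h \<bullet> c) * Df c x)"
      using b(2) \<open>B \<subseteq> Basis\<close> by (simp add: t_def finite_subset[OF _ finite_Basis])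
    ultimately show "\<bar>f (x + h) - f x - (\<Sum>c\<in>insert b B. (h \<bullet> c) * Df c x)\<bar> \<le> e * norm h"
      using est_B by linarith
  qed
qed

lemma linearization_on_coordinate_subspace:
  fixes f :: "'a::euclidean_space \<Rightarrow> real"
  assumes S: "open S" "x \<in> S"
    and D: "\<And>b y u. b \<in> Basis \<Longrightarrow> y + u *\<^sub>R b \<in> S \<Longrightarrow>
      ((\<lambda>t. f (y + t *\<^sub>R b)) has_real_derivative Df b (y + u *\<^sub>R b)) (at u)"
    and cont: "\<And>b. b \<in> Basis \<Longrightarrow> continuous_on S (Df b)"
    and "B \<subseteq> Basis" and "e > 0"
  shows "\<exists>d>0. \<forall>h. (\<forall>b\<in>Basis - B. h \<bullet> b = 0) \<longrightarrow> norm h < d \<longrightarrow>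
           \<bar>f (x + h) - f x - (\<Sum>b\<in>B. (h \<bullet> b) * Df b x)\<bar> \<le> e * norm h"
proof -
  have "finite B" using \<open>B \<subseteq> Basis\<close> finite_Basis finite_subset by blast
  from this \<open>B \<subseteq> Basis\<close> \<open>e > 0\<close> show ?thesis
  proof (induction B arbitrary: e rule: finite_induct)
    case empty
    show ?case
    proof (intro exI[of _ "1::real"] conjI allI impI)
      fix h :: 'a assume "\<forall>b\<in>Basis - {}. h \<bullet> b = 0"
      then have "h = 0" by (metis Diff_empty euclidean_all_zero_iff)
      then show "\<bar>f (x + h) - f x - (\<Sum>b\<in>{}. (h \<bullet> b) * Df b x)\<bar> \<le> e * norm h" by simp
    qed simp
  next
    case (insert b B)
    then have b: "b \<in> Basis" and "B \<subseteq> Basis" by auto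
    from insert.IH[OF \<open>B \<subseteq> Basis\<close>, of "e/4"] \<open>e > 0\<close> obtain d1 where "d1 > 0"
      and "\<And>h. \<forall>c\<in>Basis - B. h \<bullet> c = 0 \<Longrightarrow> norm h < d1 \<Longrightarrow>
        \<bar>f (x + h) - f x - (\<Sum>c\<in>B. (h \<bullet> c) * Df c x)\<bar> \<le> e/4 * norm h"
      by auto
    moreover have "continuous (at x) (Df b)"
      using cont[OF b] S continuous_on_eq_continuous_at by blast
    ultimately show ?case
      using linearization_insert_coordinate[where Df = Df, OF S D[OF b] _ b insert.hyps(2) \<open>B \<subseteq> Basis\<close> \<open>e > 0\<close>]
      by blast
  qed
qed

lemma has_derivative_of_continuous_partials:
  fixes f :: "'a::euclidean_space \<Rightarrow> real"
  assumes "open S" "x \<in> S"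
    and "\<And>b y u. b \<in> Basis \<Longrightarrow> y + u *\<^sub>R b \<in> S \<Longrightarrow>
      ((\<lambda>t. f (y + t *\<^sub>R b)) has_real_derivative Df b (y + u *\<^sub>R b)) (at u)"
    and "\<And>b. b \<in> Basis \<Longrightarrow> continuous_on S (Df b)"
  shows "(f has_derivative (\<lambda>h. \<Sum>b\<in>Basis. (h \<bullet> b) * Df b x)) (at x)"
  unfolding has_derivative_at_alt
proof (intro conjI allI impI)
  show "bounded_linear (\<lambda>h. \<Sum>b\<in>Basis. (h \<bullet> b) * Df b x)"
    by (intro bounded_linear_sum bounded_linear_mult_left[THEN bounded_linear_compose]
        bounded_linear_inner_left)
  fix e :: real assume "e > 0"
  from linearization_on_coordinate_subspace[OF assms order_refl this]
  obtain d where "d > 0" and d: "\<And>h. norm h < d \<Longrightarrow>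
      \<bar>f (x + h) - f x - (\<Sum>b\<in>Basis. (h \<bullet> b) * Df b x)\<bar> \<le> e * norm h"
    by auto
  show "\<exists>d>0. \<forall>y. norm (y - x) < d \<longrightarrow>
      norm (f y - f x - (\<Sum>b\<in>Basis. ((y - x) \<bullet> b) * Df b x)) \<le> e * norm (y - x)"
    using d[of "_ - x"] \<open>d > 0\<close> by (auto intro!: exI[of _ d])
qed

lemma smooth_map_on_open: "smooth_map_on S f \<Longrightarrow> open S"
  unfolding smooth_map_on_def by blast

lemma smooth_map_on_real_iff:
  fixes f :: "'a::euclidean_space \<Rightarrow> real"
  shows "smooth_map_on S f \<longleftrightarrow> open S \<and> (\<forall>bs. set bs \<subseteq> Basis \<longrightarrow> continuous_on S (pd bs f) \<and>
     (\<forall>b\<in>Basis. \<forall>x\<in>S. (\<lambda>t. pd bs f (x + t *\<^sub>R b)) differentiable (at 0)))"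
  by (simp add: smooth_map_on_def)

lemma smooth_map_on_component:
  assumes "smooth_map_on S f" "c \<in> Basis"
  shows "smooth_map_on S (\<lambda>x. f x \<bullet> c)"
proof -
  have "open S" and "\<And>bs. set bs \<subseteq> Basis \<Longrightarrow> continuous_on S (pd bs (\<lambda>x. f x \<bullet> c)) \<and>
     (\<forall>b\<in>Basis. \<forall>x\<in>S. (\<lambda>t. pd bs (\<lambda>x. f x \<bullet> c) (x + t *\<^sub>R b)) differentiable (at 0))"
    using assms unfolding smooth_map_on_def by auto
  then show ?thesis unfolding smooth_map_on_real_iff by blast
qed

lemma smooth_map_on_continuous_pd:
  fixes f :: "'a::euclidean_space \<Rightarrow> real"
  assumes "smooth_map_on S f" "set bs \<subseteq> Basis"
  shows "continuous_on S (pd bs f)"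
  using assms unfolding smooth_map_on_real_iff by blast

lemma smooth_map_on_pd_has_real_derivative:
  fixes f :: "'a::euclidean_space \<Rightarrow> real"
  assumes "smooth_map_on S f" "set bs \<subseteq> Basis" "b \<in> Basis" "y + u *\<^sub>R b \<in> S"
  shows "((\<lambda>t. pd bs f (y + t *\<^sub>R b)) has_real_derivative pd (b # bs) f (y + u *\<^sub>R b)) (at u)"
proof -
  have "(\<lambda>t. pd bs f ((y + u *\<^sub>R b) + t *\<^sub>R b)) differentiable (at 0)"
    using assms unfolding smooth_map_on_real_iff by blast
  then have "((\<lambda>t. pd bs f ((y + u *\<^sub>R b) + t *\<^sub>R b)) has_real_derivative pd (b # bs) f (y + u *\<^sub>R b)) (at 0)"
    by (simp only: pd.simps DERIV_deriv_iff_real_differentiable)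
  then have "((\<lambda>t. pd bs f (y + (t + u) *\<^sub>R b)) has_real_derivative pd (b # bs) f (y + u *\<^sub>R b)) (at 0)"
    by (simp add: scaleR_add_left add.assoc add.commute add.left_commute)
  then have "((\<lambda>t. pd bs f (y + t *\<^sub>R b)) has_real_derivative pd (b # bs) f (y + u *\<^sub>R b)) (at (0 + u))"
    using DERIV_shift by blast
  then show ?thesis by simp
qed

lemma smooth_map_on_has_derivative:
  fixes f :: "'a::euclidean_space \<Rightarrow> real"
  assumes "smooth_map_on S f" "x \<in> S"
  shows "(f has_derivative (\<lambda>h. \<Sum>b\<in>Basis. (h \<bullet> b) * pd [b] f x)) (at x)"
proof (rule has_derivative_of_continuous_partials[OF smooth_map_on_open[OF assms(1)] assms(2)])
  fix b y u assume "b \<in> Basis" "y + u *\<^sub>R b \<in> S"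
  then show "((\<lambda>t. f (y + t *\<^sub>R b)) has_real_derivative pd [b] f (y + u *\<^sub>R b)) (at u)"
    using smooth_map_on_pd_has_real_derivative[OF assms(1), of "[]"] by simp
next
  fix b :: 'a assume "b \<in> Basis"
  then show "continuous_on S (pd [b] f)"
    using smooth_map_on_continuous_pd[OF assms(1), of "[b]"] by simp
qed

lemma smooth_map_on_differentiable:
  assumes "smooth_map_on S f" "x \<in> S"
  shows "f differentiable (at x)"
proof -
  have "(\<lambda>y. f y \<bullet> c) differentiable (at x)" if "c \<in> Basis" for c
    using smooth_map_on_has_derivative[OF smooth_map_on_component[OF assms(1) that] assms(2)]
    unfolding differentiable_def by blast
  then show ?thesis by (subst differentiable_componentwise_within) blast
qed

lemma smooth_map_on_chain_rule:
  fixes f :: "real^'n \<Rightarrow> real"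
  assumes "smooth_map_on S f" "\<gamma> t \<in> S" "(\<gamma> has_vector_derivative v) (at t)"
  shows "((\<lambda>t. f (\<gamma> t)) has_real_derivative (\<Sum>i\<in>UNIV. v $ i * pd [axis i 1] f (\<gamma> t))) (at t)"
proof -
  have "((f \<circ> \<gamma>) has_derivative (\<lambda>h. \<Sum>b\<in>Basis. ((h *\<^sub>R v) \<bullet> b) * pd [b] f (\<gamma> t))) (at t)"
    using diff_chain_at[OF assms(3)[unfolded has_vector_derivative_def]
        smooth_map_on_has_derivative[OF assms(1,2)]] by (simp add: o_def)
  moreover have "(\<lambda>h. \<Sum>b\<in>Basis. ((h *\<^sub>R v) \<bullet> b) * pd [b] f (\<gamma> t))
      = (*) (\<Sum>i\<in>UNIV. v $ i * pd [axis i 1] f (\<gamma> t))"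
    by (simp add: fun_eq_iff sum_distrib_left Basis_vec_def sum.reindex axis_eq_axis inj_on_def
        inner_axis mult_ac UNION_singleton_eq_range)
  ultimately show ?thesis unfolding has_field_derivative_def o_def by simp
qed

section \<open>Symmetry of mixed partial derivatives\<close>

lemma second_difference_mean_value:
  fixes f :: "'a::real_normed_vector \<Rightarrow> real"
  assumes U: "\<And>a b. \<bar>a\<bar> \<le> h \<Longrightarrow> \<bar>b\<bar> \<le> h \<Longrightarrow> p + a *\<^sub>R u + b *\<^sub>R v \<in> U"
    and "h > 0"
    and Du: "\<And>y a. y + a *\<^sub>R u \<in> U \<Longrightarrow>
      ((\<lambda>t. f (y + t *\<^sub>R u)) has_real_derivative fu (y + a *\<^sub>R u)) (at a)"
    and Duv: "\<And>y a. y + a *\<^sub>R v \<in> U \<Longrightarrow>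
      ((\<lambda>t. fu (y + t *\<^sub>R v)) has_real_derivative fuv (y + a *\<^sub>R v)) (at a)"
  obtains a b where "\<bar>a\<bar> \<le> h" "\<bar>b\<bar> \<le> h"
    "f (p + h *\<^sub>R u + h *\<^sub>R v) - f (p + h *\<^sub>R u) - f (p + h *\<^sub>R v) + f p
       = h * h * fuv (p + a *\<^sub>R u + b *\<^sub>R v)"
proof -
  define \<phi> where "\<phi> a = f (p + h *\<^sub>R v + a *\<^sub>R u) - f (p + a *\<^sub>R u)" for a
  have "(\<phi> has_real_derivative (fu (p + h *\<^sub>R v + a *\<^sub>R u) - fu (p + a *\<^sub>R u))) (at a)"
    if "0 \<le> a" "a \<le> h" for a
  proof -
    have "p + h *\<^sub>R v + a *\<^sub>R u \<in> U" using U[of a h] that by (simp add: add_ac)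
    moreover have "p + a *\<^sub>R u \<in> U" using U[of a 0] that \<open>h > 0\<close> by simp
    ultimately show ?thesis unfolding \<phi>_def by (intro DERIV_diff Du)
  qed
  from MVT2[OF \<open>h > 0\<close> this] obtain a where a: "0 < a" "a < h"
    and \<phi>_incr: "\<phi> h - \<phi> 0 = (h - 0) * (fu (p + h *\<^sub>R v + a *\<^sub>R u) - fu (p + a *\<^sub>R u))"
    by blast
  define \<psi> where "\<psi> b = fu (p + a *\<^sub>R u + b *\<^sub>R v)" for b
  have "(\<psi> has_real_derivative fuv (p + a *\<^sub>R u + b *\<^sub>R v)) (at b)" if "0 \<le> b" "b \<le> h" for b
    unfolding \<psi>_def using that a by (intro Duv U) auto
  from MVT2[OF \<open>h > 0\<close> this] obtain b where b: "0 < b" "b < h"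
    and \<psi>_incr: "\<psi> h - \<psi> 0 = (h - 0) * fuv (p + a *\<^sub>R u + b *\<^sub>R v)"
    by blast
  have "f (p + h *\<^sub>R u + h *\<^sub>R v) - f (p + h *\<^sub>R u) - f (p + h *\<^sub>R v) + f p = \<phi> h - \<phi> 0"
    by (simp add: \<phi>_def add_ac)
  also have "\<dots> = h * (\<psi> h - \<psi> 0)" unfolding \<phi>_incr \<psi>_def by (simp add: add_ac)
  also have "\<dots> = h * h * fuv (p + a *\<^sub>R u + b *\<^sub>R v)" unfolding \<psi>_incr by simp
  finally show ?thesis using a b by (intro that[of a b]) auto
qed

lemma mixed_partials_commute:
  fixes f :: "'a::real_normed_vector \<Rightarrow> real"
  assumes "open U" "p \<in> U"
    and Du: "\<And>y a. y + a *\<^sub>R u \<in> U \<Longrightarrow>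
      ((\<lambda>t. f (y + t *\<^sub>R u)) has_real_derivative fu (y + a *\<^sub>R u)) (at a)"
    and Dv: "\<And>y a. y + a *\<^sub>R v \<in> U \<Longrightarrow>
      ((\<lambda>t. f (y + t *\<^sub>R v)) has_real_derivative fv (y + a *\<^sub>R v)) (at a)"
    and Duv: "\<And>y a. y + a *\<^sub>R v \<in> U \<Longrightarrow>
      ((\<lambda>t. fu (y + t *\<^sub>R v)) has_real_derivative fuv (y + a *\<^sub>R v)) (at a)"
    and Dvu: "\<And>y a. y + a *\<^sub>R u \<in> U \<Longrightarrow>
      ((\<lambda>t. fv (y + t *\<^sub>R u)) has_real_derivative fvu (y + a *\<^sub>R u)) (at a)"
    and "continuous (at p) fuv" "continuous (at p) fvu"
  shows "fuv p = fvu p"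
proof (rule ccontr)
  assume "fuv p \<noteq> fvu p"
  define e where "e = \<bar>fuv p - fvu p\<bar> / 2"
  have "e > 0" using \<open>fuv p \<noteq> fvu p\<close> by (simp add: e_def)
  obtain r1 where "r1 > 0" and r1: "\<And>y. dist y p < r1 \<Longrightarrow> dist (fuv y) (fuv p) < e"
    using \<open>continuous (at p) fuv\<close> \<open>e > 0\<close> unfolding continuous_at_eps_delta by blast
  obtain r2 where "r2 > 0" and r2: "\<And>y. dist y p < r2 \<Longrightarrow> dist (fvu y) (fvu p) < e"
    using \<open>continuous (at p) fvu\<close> \<open>e > 0\<close> unfolding continuous_at_eps_delta by blast
  obtain r3 where "r3 > 0" and r3: "ball p r3 \<subseteq> U" using \<open>open U\<close> \<open>p \<in> U\<close> openE by blast
  define r where "r = min r1 (min r2 r3)"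
  define h where "h = r / (norm u + norm v + 1)"
  have "r > 0" using \<open>r1 > 0\<close> \<open>r2 > 0\<close> \<open>r3 > 0\<close> by (simp add: r_def)
  have "norm u + norm v + 1 > 0" by (simp add: add_nonneg_pos)
  with \<open>r > 0\<close> have "h > 0" by (simp add: h_def)
  have near: "dist (p + a *\<^sub>R u + b *\<^sub>R v) p < r" if "\<bar>a\<bar> \<le> h" "\<bar>b\<bar> \<le> h" for a b
  proof -
    have "dist (p + a *\<^sub>R u + b *\<^sub>R v) p \<le> \<bar>a\<bar> * norm u + \<bar>b\<bar> * norm v"
      by (simp add: dist_norm add.assoc norm_triangle_le)
    also have "\<dots> \<le> h * (norm u + norm v)"
      using that by (simp add: distrib_left mult_right_mono add_mono)
    also have "\<dots> < h * (norm u + norm v + 1)" using \<open>h > 0\<close> by simp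
    also have "\<dots> = r" using \<open>norm u + norm v + 1 > 0\<close> by (simp add: h_def)
    finally show ?thesis .
  qed
  have inU: "p + a *\<^sub>R u + b *\<^sub>R v \<in> U" "p + b *\<^sub>R v + a *\<^sub>R u \<in> U"
    if "\<bar>a\<bar> \<le> h" "\<bar>b\<bar> \<le> h" for a b
    using near[OF that] r3 by (auto simp: r_def dist_commute add_ac)
  obtain a1 b1 where ab1: "\<bar>a1\<bar> \<le> h" "\<bar>b1\<bar> \<le> h" and
    uv: "f (p + h *\<^sub>R u + h *\<^sub>R v) - f (p + h *\<^sub>R u) - f (p + h *\<^sub>R v) + f p
         = h * h * fuv (p + a1 *\<^sub>R u + b1 *\<^sub>R v)"
    using second_difference_mean_value[OF inU(1) \<open>h > 0\<close> Du Duv] by blast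
  obtain a2 b2 where ab2: "\<bar>a2\<bar> \<le> h" "\<bar>b2\<bar> \<le> h" and
    vu: "f (p + h *\<^sub>R v + h *\<^sub>R u) - f (p + h *\<^sub>R v) - f (p + h *\<^sub>R u) + f p
         = h * h * fvu (p + a2 *\<^sub>R v + b2 *\<^sub>R u)"
    using second_difference_mean_value[OF inU(2) \<open>h > 0\<close> Dv Dvu] by blast
  have "h * h * fuv (p + a1 *\<^sub>R u + b1 *\<^sub>R v) = h * h * fvu (p + b2 *\<^sub>R u + a2 *\<^sub>R v)"
  proof -
    have swap: "p + h *\<^sub>R v + h *\<^sub>R u = p + h *\<^sub>R u + h *\<^sub>R v"
      "p + a2 *\<^sub>R v + b2 *\<^sub>R u = p + b2 *\<^sub>R u + a2 *\<^sub>R v"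
      by (simp_all add: add_ac)
    show ?thesis using uv vu unfolding swap by linarith
  qed
  then have "fuv (p + a1 *\<^sub>R u + b1 *\<^sub>R v) = fvu (p + b2 *\<^sub>R u + a2 *\<^sub>R v)"
    using \<open>h > 0\<close> by simp
  moreover have "dist (fuv (p + a1 *\<^sub>R u + b1 *\<^sub>R v)) (fuv p) < e"
    using r1 near[OF ab1] by (simp add: r_def)
  moreover have "dist (fvu (p + b2 *\<^sub>R u + a2 *\<^sub>R v)) (fvu p) < e"
    using r2 near[OF ab2(2,1)] by (simp add: r_def)
  ultimately have "\<bar>fuv p - fvu p\<bar> < 2 * e" by (simp add: dist_real_def)
  then show False by (simp add: e_def)
qed

lemma has_vector_derivative_vec_iff:
  fixes \<gamma> :: "real \<Rightarrow> 'b::euclidean_space ^ 'n"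
  shows "(\<gamma> has_vector_derivative v) (at t) \<longleftrightarrow> (\<forall>i. ((\<lambda>s. \<gamma> s $ i) has_vector_derivative v $ i) (at t))"
proof
  assume "(\<gamma> has_vector_derivative v) (at t)"
  then show "\<forall>i. ((\<lambda>s. \<gamma> s $ i) has_vector_derivative v $ i) (at t)"
    using bounded_linear.has_vector_derivative[OF bounded_linear_vec_nth] by blast
next
  assume "\<forall>i. ((\<lambda>s. \<gamma> s $ i) has_vector_derivative v $ i) (at t)"
  then have "((\<lambda>s. \<gamma> s $ i \<bullet> c) has_derivative (\<lambda>h. (h *\<^sub>R v) $ i \<bullet> c)) (at t)"
    if "c \<in> Basis" for i c
    using that unfolding has_vector_derivative_def has_derivative_componentwise_within[of "\<lambda>s. \<gamma> s $ _"]
    by simp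
  then show "(\<gamma> has_vector_derivative v) (at t)"
    unfolding has_vector_derivative_def
    by (subst has_derivative_componentwise_within) (auto simp: Basis_vec_def inner_axis)
qed

lemma bounded_bilinear_matrix_vector_mult: "bounded_bilinear (\<lambda>(A::real^'m^'n) x. A *v x)"
  unfolding bilinear_conv_bounded_bilinear[symmetric] bilinear_def
  by (auto intro!: linearI simp: matrix_vector_mult_add_rdistrib scaleR_matrix_vector_assoc
      matrix_vector_right_distrib matrix_vector_mult_scaleR)

lemma bilinear_form_has_real_derivative:
  fixes u w :: "real \<Rightarrow> real^'n" and M :: "real \<Rightarrow> real^'n^'n"
  assumes "(u has_vector_derivative u') (at t)" "(M has_vector_derivative M') (at t)"
    and "(w has_vector_derivative w') (at t)"
  shows "((\<lambda>s. u s \<bullet> (M s *v w s)) has_real_derivative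
           u' \<bullet> (M t *v w t) + u t \<bullet> (M' *v w t) + u t \<bullet> (M t *v w')) (at t)"
  unfolding has_real_derivative_iff_has_vector_derivative
  using bounded_bilinear.has_vector_derivative[OF bounded_bilinear_inner assms(1)
      bounded_bilinear.has_vector_derivative[OF bounded_bilinear_matrix_vector_mult assms(2,3)]]
  by (simp add: algebra_simps inner_add_right)

lemma symmetric_matrix_inner_commute:
  fixes g :: "real^'n^'n"
  assumes "transpose g = g"
  shows "u \<bullet> (g *v v) = v \<bullet> (g *v u)"
proof -
  have "u \<bullet> (g *v v) = (u v* g) \<bullet> v" by (simp add: dot_lmul_matrix)
  also have "u v* g = g *v u" using vector_transpose_matrix[of u g] assms by simp
  finally show ?thesis by (simp add: inner_commute)
qed

section \<open>Lorentzian linear algebra\<close>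

lemma lorentzian_form_no_orthogonal_timelike:
  fixes g :: "real^'n^'n"
  assumes g: "lorentzian_form g"
    and X: "X \<bullet> (g *v X) < 0" and w: "w \<bullet> (g *v w) < 0" and wX: "w \<bullet> (g *v X) = 0"
  shows False
proof -
  have "transpose g = g"
    and neg: "\<And>S. subspace S \<Longrightarrow> \<forall>v\<in>S. v \<noteq> 0 \<longrightarrow> v \<bullet> (g *v v) < 0 \<Longrightarrow> dim S \<le> 1"
    using g unfolding lorentzian_form_def by blast+
  then have Xw: "X \<bullet> (g *v w) = 0" using wX symmetric_matrix_inner_commute by metis
  have "w \<notin> span {X}"
  proof
    assume "w \<in> span {X}"
    then obtain c where "w = c *\<^sub>R X" by (auto simp: span_singleton)
    then have "c * (X \<bullet> (g *v X)) = 0" using wX by (simp add: matrix_vector_mult_scaleR)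
    then show False using X w \<open>w = c *\<^sub>R X\<close> by simp
  qed
  moreover have "independent {X}" using X by auto
  ultimately have "independent {w, X}" by (rule independent_insertI)
  moreover have "w \<noteq> X" using \<open>w \<notin> span {X}\<close> span_base by blast
  ultimately have "dim (span {w, X}) = 2" by (simp add: dim_eq_card_independent)
  moreover have "dim (span {w, X}) \<le> 1"
  proof (rule neg[OF subspace_span], intro ballI impI)
    fix v assume "v \<in> span {w, X}" "v \<noteq> 0"
    then obtain a b where v: "v = a *\<^sub>R w + b *\<^sub>R X"
      by (auto simp: span_breakdown_eq span_singleton algebra_simps)
    then have "a \<noteq> 0 \<or> b \<noteq> 0" using \<open>v \<noteq> 0\<close> by auto
    then have "a * a * (w \<bullet> (g *v w)) < 0 \<or> b * b * (X \<bullet> (g *v X)) < 0"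
      using X w by (metis mult_pos_neg not_real_square_gt_zero)
    moreover have "a * a * (w \<bullet> (g *v w)) \<le> 0" "b * b * (X \<bullet> (g *v X)) \<le> 0"
      using X w by (simp_all add: mult_nonneg_nonpos)
    ultimately have "a * a * (w \<bullet> (g *v w)) + b * b * (X \<bullet> (g *v X)) < 0" by linarith
    moreover have "v \<bullet> (g *v v) = a * a * (w \<bullet> (g *v w)) + b * b * (X \<bullet> (g *v X))"
      using wX Xw unfolding v
      by (simp add: matrix_vector_right_distrib matrix_vector_mult_scaleR inner_add_left inner_add_right
          algebra_simps)
    ultimately show "v \<bullet> (g *v v) < 0" by simp
  qed
  ultimately show False by simp
qed

lemma lorentzian_form_timelike_not_orthogonal_null:
  fixes g :: "real^'n^'n"
  assumes g: "lorentzian_form g"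
    and X: "X \<bullet> (g *v X) < 0" and T: "T \<bullet> (g *v T) = 0" "T \<noteq> 0"
  shows "X \<bullet> (g *v T) \<noteq> 0"
proof
  assume XT: "X \<bullet> (g *v T) = 0"
  have sym: "transpose g = g" and "det g \<noteq> 0" using g unfolding lorentzian_form_def by blast+
  then have "g *v T \<noteq> 0"
    using T(2) invertible_det_nz inj_matrix_vector_mult[of g] by (metis injD matrix_vector_mult_0_right)
  define a where "a = (g *v T) \<bullet> (g *v T)"
  have "a > 0" using \<open>g *v T \<noteq> 0\<close> by (simp add: a_def)
  \<comment> \<open>z is g-orthogonal to X but not to T, so moving T slightly against z makes it timelike\<close>
  define z where "z = g *v T - (((g *v T) \<bullet> (g *v X)) / (X \<bullet> (g *v X))) *\<^sub>R X"
  have zX: "z \<bullet> (g *v X) = 0" using X by (simp add: z_def inner_diff_left)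
  have zT: "z \<bullet> (g *v T) = a" using XT by (simp add: z_def a_def inner_diff_left)
  define q where "q = z \<bullet> (g *v z)"
  define \<epsilon> where "\<epsilon> = a / (\<bar>q\<bar> + 1)"
  have "\<epsilon> > 0" using \<open>a > 0\<close> by (simp add: \<epsilon>_def add_pos_nonneg)
  have "\<epsilon> * q < a"
  proof -
    have "\<epsilon> * q \<le> \<epsilon> * \<bar>q\<bar>" using \<open>\<epsilon> > 0\<close> by (simp add: mult_left_mono)
    also have "\<dots> < \<epsilon> * (\<bar>q\<bar> + 1)" using \<open>\<epsilon> > 0\<close> by simp
    also have "\<dots> = a" by (simp add: \<epsilon>_def add_pos_nonneg)
    finally show ?thesis .
  qed
  define w where "w = T - \<epsilon> *\<^sub>R z"
  have "T \<bullet> (g *v X) = 0" using XT sym symmetric_matrix_inner_commute by metis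
  then have "w \<bullet> (g *v X) = 0" using zX by (simp add: w_def inner_diff_left)
  moreover have "w \<bullet> (g *v w) < 0"
  proof -
    have "T \<bullet> (g *v z) = a" using zT sym symmetric_matrix_inner_commute by metis
    then have "w \<bullet> (g *v w) = \<epsilon> * (\<epsilon> * q - 2 * a)"
      using T(1) zT unfolding w_def q_def
      by (simp add: matrix_vector_mult_diff_distrib matrix_vector_mult_scaleR inner_diff_left
          inner_diff_right algebra_simps)
    also have "\<dots> < 0" using \<open>\<epsilon> > 0\<close> \<open>\<epsilon> * q < a\<close> \<open>a > 0\<close> by (simp add: mult_pos_neg)
    finally show ?thesis .
  qed
  ultimately show False using lorentzian_form_no_orthogonal_timelike[OF g X] by blast
qed

section \<open>Christoffel symbols and the geodesic equation\<close>

lemma matrix_mul_matrix_inv: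
  fixes A :: "real^'n^'n"
  assumes "invertible A"
  shows "A ** matrix_inv A = mat 1"
proof -
  have "\<exists>A'. A ** A' = mat 1 \<and> A' ** A = mat 1" using assms unfolding invertible_def .
  then have "A ** matrix_inv A = mat 1 \<and> matrix_inv A ** A = mat 1"
    unfolding matrix_inv_def by (rule someI_ex)
  then show ?thesis ..
qed

lemma christoffel_lowered:
  fixes g :: "real^'n \<Rightarrow> real^'n^'n"
  assumes "invertible (g x)"
  shows "(\<Sum>m\<in>UNIV. g x $ k $ m * christoffel g x m i j)
       = (pd [axis i 1] (\<lambda>y. g y $ j $ k) x + pd [axis j 1] (\<lambda>y. g y $ i $ k) x
          - pd [axis k 1] (\<lambda>y. g y $ i $ j) x) / 2"
proof -
  define C where "C l = pd [axis i 1] (\<lambda>y. g y $ j $ l) x + pd [axis j 1] (\<lambda>y. g y $ i $ l) x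
      - pd [axis l 1] (\<lambda>y. g y $ i $ j) x" for l
  have "christoffel g x m i j = (\<Sum>l\<in>UNIV. matrix_inv (g x) $ m $ l * C l) / 2" for m
    by (simp add: christoffel_def C_def)
  then have "(\<Sum>m\<in>UNIV. g x $ k $ m * christoffel g x m i j)
      = (\<Sum>m\<in>UNIV. \<Sum>l\<in>UNIV. g x $ k $ m * matrix_inv (g x) $ m $ l * C l) / 2"
    by (simp add: sum_distrib_left sum_divide_distrib mult_ac)
  also have "\<dots> = (\<Sum>l\<in>UNIV. (\<Sum>m\<in>UNIV. g x $ k $ m * matrix_inv (g x) $ m $ l) * C l) / 2"
    by (subst sum.swap) (simp add: sum_distrib_right)
  also have "\<dots> = C k / 2"
  proof -
    have "(\<Sum>m\<in>UNIV. g x $ k $ m * matrix_inv (g x) $ m $ l) = (if k = l then 1 else 0)" for l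
      using arg_cong[OF matrix_mul_matrix_inv[OF assms], of "\<lambda>M. M $ k $ l"]
      by (simp add: matrix_matrix_mult_def mat_def)
    then show ?thesis by (simp add: mult_if_delta)
  qed
  finally show ?thesis by (simp add: C_def)
qed

definition metric_derivative :: "(real^'n \<Rightarrow> real^'n^'n) \<Rightarrow> real^'n \<Rightarrow> real^'n \<Rightarrow> real^'n^'n" where
  "metric_derivative g x v = (\<chi> k m. \<Sum>i\<in>UNIV. v $ i * pd [axis i 1] (\<lambda>y. g y $ k $ m) x)"

lemma geodesic_acceleration_lowered:
  fixes g :: "real^'n \<Rightarrow> real^'n^'n"
  assumes "invertible (g x)"
    and geo: "\<And>k. A $ k + (\<Sum>i\<in>UNIV. \<Sum>j\<in>UNIV. christoffel g x k i j * T $ i * T $ j) = 0"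
  shows "(\<Sum>m\<in>UNIV. g x $ k $ m * A $ m)
       = - (\<Sum>i\<in>UNIV. \<Sum>j\<in>UNIV. (pd [axis i 1] (\<lambda>y. g y $ j $ k) x + pd [axis j 1] (\<lambda>y. g y $ i $ k) x
              - pd [axis k 1] (\<lambda>y. g y $ i $ j) x) / 2 * T $ i * T $ j)"
proof -
  have "A $ m = - (\<Sum>i\<in>UNIV. \<Sum>j\<in>UNIV. christoffel g x m i j * T $ i * T $ j)" for m
    using geo[of m] by linarith
  then have "(\<Sum>m\<in>UNIV. g x $ k $ m * A $ m)
      = - (\<Sum>m\<in>UNIV. \<Sum>i\<in>UNIV. \<Sum>j\<in>UNIV. g x $ k $ m * christoffel g x m i j * T $ i * T $ j)"
    by (simp add: sum_distrib_left sum_negf mult_ac)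
  also have "\<dots> = - (\<Sum>i\<in>UNIV. \<Sum>j\<in>UNIV. \<Sum>m\<in>UNIV. g x $ k $ m * christoffel g x m i j * T $ i * T $ j)"
    by (subst sum.swap, subst (2) sum.swap, simp)
  finally show ?thesis
    by (simp add: sum_distrib_right[symmetric] christoffel_lowered[of g x, OF assms(1)])
qed

(* Coordinate form of g(X, \<nabla>\<^sub>T T) = 0: the difference of the two sides is the pairing of X
   with A + \<Gamma>(T, T) through the lowered Christoffel symbols. *)
lemma geodesic_equation_pairing:
  fixes g :: "real^'n \<Rightarrow> real^'n^'n" and X T A :: "real^'n"
  assumes "invertible (g x)"
    and dsym: "\<And>i k m. pd [axis i 1] (\<lambda>y. g y $ k $ m) x = pd [axis i 1] (\<lambda>y. g y $ m $ k) x"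
    and geo: "\<And>k. A $ k + (\<Sum>i\<in>UNIV. \<Sum>j\<in>UNIV. christoffel g x k i j * T $ i * T $ j) = 0"
  shows "X \<bullet> (metric_derivative g x T *v T) + X \<bullet> (g x *v A)
       = T \<bullet> (metric_derivative g x X *v T) / 2"
proof -
  define d where "d i j k = pd [axis i 1] (\<lambda>y. g y $ j $ k) x" for i j k
  define S where "S k = (\<Sum>i\<in>UNIV. \<Sum>j\<in>UNIV. d i j k * T $ i * T $ j)" for k
  define R where "R k = (\<Sum>i\<in>UNIV. \<Sum>j\<in>UNIV. d k i j * T $ i * T $ j)" for k
  have MD: "metric_derivative g x v $ k $ m = (\<Sum>i\<in>UNIV. v $ i * d i k m)" for v k m
    by (simp add: metric_derivative_def d_def)
  have dsym': "d i k m = d i m k" for i k m unfolding d_def by (rule dsym)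
  have gA: "(\<Sum>m\<in>UNIV. g x $ k $ m * A $ m) = - (S k + S k - R k) / 2" for k
  proof -
    have "(\<Sum>i\<in>UNIV. \<Sum>j\<in>UNIV. d j i k * T $ i * T $ j) = S k"
      unfolding S_def by (subst sum.swap) (simp add: mult_ac)
    then have "(\<Sum>i\<in>UNIV. \<Sum>j\<in>UNIV. (d i j k + d j i k - d k i j) / 2 * T $ i * T $ j)
        = (S k + S k - R k) / 2"
      unfolding S_def R_def
      by (simp add: add_divide_distrib diff_divide_distrib distrib_right left_diff_distrib
          sum.distrib sum_subtractf sum_divide_distrib[symmetric])
    then show ?thesis
      using geodesic_acceleration_lowered[of g x A T k, OF assms(1) geo] unfolding d_def by linarith
  qed
  have XgA: "X \<bullet> (g x *v A) = (\<Sum>k\<in>UNIV. X $ k * (\<Sum>m\<in>UNIV. g x $ k $ m * A $ m))"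
    by (simp add: inner_vec_def matrix_vector_mult_def)
  have "(metric_derivative g x T *v T) $ k = (\<Sum>m\<in>UNIV. \<Sum>i\<in>UNIV. d i m k * T $ i * T $ m)" for k
    by (simp add: matrix_vector_mult_def MD sum_distrib_left sum_distrib_right mult_ac dsym'[of _ k])
  also have "\<dots> k = S k" for k unfolding S_def by (subst sum.swap) simp
  finally have DT: "X \<bullet> (metric_derivative g x T *v T) = (\<Sum>k\<in>UNIV. X $ k * S k)"
    by (simp add: inner_vec_def)
  have "T \<bullet> (metric_derivative g x X *v T)
      = (\<Sum>i\<in>UNIV. \<Sum>j\<in>UNIV. \<Sum>k\<in>UNIV. X $ k * (d k i j * T $ i * T $ j))"
    by (simp add: inner_vec_def matrix_vector_mult_def MD sum_distrib_left sum_distrib_right mult_ac)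
  also have "\<dots> = (\<Sum>k\<in>UNIV. X $ k * R k)"
    unfolding R_def sum_distrib_left by (subst sum.swap, subst (2) sum.swap, simp)
  finally have DX: "T \<bullet> (metric_derivative g x X *v T) = (\<Sum>k\<in>UNIV. X $ k * R k)" .
  show ?thesis
    unfolding XgA DT DX gA sum.distrib[symmetric] sum_divide_distrib
    by (rule sum.cong) (simp_all add: field_simps)
qed

lemma smooth_family_on_coord:
  assumes "smooth_family_on A W F" "c \<in> A"
  shows "smooth_map_on (W \<inter> F -` fst c) (\<lambda>q. snd c (F q) $ k)"
proof -
  have "smooth_map_on (W \<inter> F -` fst c) (snd c \<circ> F)"
    using assms unfolding smooth_family_on_def by blast
  from smooth_map_on_component[OF this, of "axis k 1"] show ?thesis
    by (simp add: inner_axis)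
qed

lemma coord_partial_has_vector_derivative:
  assumes "smooth_family_on A W F" "c \<in> A" "set bs \<subseteq> Basis" "e \<in> Basis"
    and "p + u *\<^sub>R e \<in> W" "F (p + u *\<^sub>R e) \<in> fst c"
  shows "((\<lambda>t. coord_partial c F bs (p + t *\<^sub>R e)) has_vector_derivative
           coord_partial c F (e # bs) (p + u *\<^sub>R e)) (at u)"
proof -
  have "((\<lambda>t. coord_partial c F bs (p + t *\<^sub>R e) $ k) has_real_derivative
          coord_partial c F (e # bs) (p + u *\<^sub>R e) $ k) (at u)" for k
    using smooth_map_on_pd_has_real_derivative[OF smooth_family_on_coord[OF assms(1,2)] assms(3,4)]
      assms(5,6)
    by (simp add: coord_partial_def)
  then show ?thesis
    by (simp add: has_vector_derivative_vec_iff has_real_derivative_iff_has_vector_derivative)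
qed

lemma lorentzian_manifold_metric:
  assumes "lorentzian_manifold A G" "c \<in> A"
  shows "smooth_map_on (snd c ` fst c) (G c)"
    and "x \<in> snd c ` fst c \<Longrightarrow> lorentzian_form (G c x)"
  using assms unfolding lorentzian_manifold_def lorentzian_metric_def by blast+

lemma metric_has_vector_derivative:
  assumes "lorentzian_manifold A G" "c \<in> A"
    and "\<gamma> t \<in> snd c ` fst c" "(\<gamma> has_vector_derivative v) (at t)"
  shows "((\<lambda>s. G c (\<gamma> s)) has_vector_derivative metric_derivative (G c) (\<gamma> t) v) (at t)"
proof -
  have "smooth_map_on (snd c ` fst c) (\<lambda>y. G c y $ k $ m)" for k m
    using smooth_map_on_component[OF lorentzian_manifold_metric(1)[OF assms(1,2)], of "axis k (axis m 1)"]
    by (simp add: inner_axis)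
  from smooth_map_on_chain_rule[OF this assms(3,4)]
  show ?thesis
    by (simp add: has_vector_derivative_vec_iff has_real_derivative_iff_has_vector_derivative
        metric_derivative_def)
qed

lemma pd_cong_open:
  assumes "open S" "x \<in> S" "\<And>y. y \<in> S \<Longrightarrow> f y = g y"
  shows "pd [b] f x = pd [b] g x"
proof -
  define V where "V = (\<lambda>t::real. x + t *\<^sub>R b) -` S"
  have "open V" unfolding V_def
    by (rule continuous_open_vimage[OF assms(1)]) (auto intro!: continuous_intros)
  moreover have "0 \<in> V" using assms(2) by (simp add: V_def)
  ultimately have "eventually (\<lambda>t. f (x + t *\<^sub>R b) = g (x + t *\<^sub>R b)) (nhds 0)"
    using assms(3) by (auto simp: V_def eventually_nhds)
  then show ?thesis by (simp add: deriv_cong_ev)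
qed

lemma metric_pd_symmetric:
  assumes "lorentzian_manifold A G" "c \<in> A" "x \<in> snd c ` fst c"
  shows "pd [b] (\<lambda>y. G c y $ k $ m) x = pd [b] (\<lambda>y. G c y $ m $ k) x"
proof (rule pd_cong_open[OF smooth_map_on_open[OF lorentzian_manifold_metric(1)[OF assms(1,2)]] assms(3)])
  fix y assume "y \<in> snd c ` fst c"
  then have "transpose (G c y) = G c y"
    using lorentzian_manifold_metric(2)[OF assms(1,2)] unfolding lorentzian_form_def by blast
  then show "G c y $ k $ m = G c y $ m $ k" by (metis transpose_def vec_lambda_beta)
qed

lemma transition_chart_eq:
  assumes "is_chart c" "y \<in> fst c"
  shows "transition c d (snd c y) = snd d y"
  using assms unfolding is_chart_def homeomorphism_def transition_def by simp

lemma coord_partial_transition: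
  assumes "smooth_atlas A" "c \<in> A" "d \<in> A" "smooth_family_on A W F"
    and "p \<in> W" "F p \<in> fst c" "F p \<in> fst d" "e \<in> Basis"
  shows "coord_partial d F [e] p
       = jacobian (transition c d) (at (snd c (F p))) *v coord_partial c F [e] p"
proof -
  define \<tau> where "\<tau> = transition c d"
  define J where "J = jacobian \<tau> (at (snd c (F p)))"
  have "is_chart c" and "smooth_map_on (snd c ` (fst c \<inter> fst d)) \<tau>"
    using assms(1-3) unfolding smooth_atlas_def \<tau>_def by blast+
  moreover have "snd c (F p) \<in> snd c ` (fst c \<inter> fst d)" using assms(6,7) by blast
  ultimately have "\<tau> differentiable (at (snd c (F p)))" by (blast intro: smooth_map_on_differentiable)
  then have D\<tau>: "(\<tau> has_derivative (\<lambda>h. J *v h)) (at (snd c (F p)))"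
    unfolding J_def by (simp add: jacobian_works)
  have curve: "((\<lambda>t. coord_partial b F [] (p + t *\<^sub>R e)) has_vector_derivative coord_partial b F [e] p) (at 0)"
    if "b \<in> A" "F p \<in> fst b" for b
    using coord_partial_has_vector_derivative[OF assms(4) that(1) _ assms(8), of "[]" p 0] assms(5) that(2)
    by simp
  have coord0: "coord_partial b F [] q = snd b (F q)" for b q
    by (simp add: coord_partial_def vec_eq_iff)
  have "((\<tau> \<circ> (\<lambda>t. snd c (F (p + t *\<^sub>R e)))) has_vector_derivative J *v coord_partial c F [e] p) (at 0)"
  proof -
    have "(\<tau> has_derivative (\<lambda>h. J *v h)) (at ((\<lambda>t. snd c (F (p + t *\<^sub>R e))) 0))"
      using D\<tau> by simp
    from vector_derivative_diff_chain_within[OF curve[OF assms(2,6), unfolded coord0]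
        has_derivative_at_withinI[OF this]]
    show ?thesis .
  qed
  moreover have "open ((\<lambda>t. p + t *\<^sub>R e) -` (W \<inter> F -` fst c))"
    using smooth_map_on_open[OF smooth_family_on_coord[OF assms(4,2)]]
    by (intro continuous_open_vimage) (auto intro!: continuous_intros)
  moreover have "0 \<in> (\<lambda>t. p + t *\<^sub>R e) -` (W \<inter> F -` fst c)" using assms(5,6) by simp
  moreover have "(\<tau> \<circ> (\<lambda>t. snd c (F (p + t *\<^sub>R e)))) t = snd d (F (p + t *\<^sub>R e))"
    if "t \<in> (\<lambda>t. p + t *\<^sub>R e) -` (W \<inter> F -` fst c)" for t
    using that transition_chart_eq[OF \<open>is_chart c\<close>] by (simp add: \<tau>_def)
  ultimately have "((\<lambda>t. snd d (F (p + t *\<^sub>R e))) has_vector_derivative J *v coord_partial c F [e] p) (at 0)"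
    by (rule has_vector_derivative_transform_within_open)
  then show ?thesis
    using vector_derivative_unique_at curve[OF assms(3,7), unfolded coord0] by (simp add: J_def \<tau>_def)
qed

lemma inner_matrix_transpose: "((A::real^'n^'n) *v u) \<bullet> v = u \<bullet> (transpose A *v v)"
  using dot_lmul_matrix[of u "transpose A" v] vector_transpose_matrix[of u A] by simp

lemma metric_pairing_chart_independent:
  assumes "lorentzian_manifold A G" "c \<in> A" "d \<in> A" "smooth_family_on A W F"
    and "p \<in> W" "F p \<in> fst c" "F p \<in> fst d" "e \<in> Basis" "e' \<in> Basis"
  shows "coord_partial c F [e] p \<bullet> (G c (snd c (F p)) *v coord_partial c F [e'] p)
       = coord_partial d F [e] p \<bullet> (G d (snd d (F p)) *v coord_partial d F [e'] p)"
proof -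
  have "smooth_atlas A" using assms(1) unfolding lorentzian_manifold_def by blast
  define J where "J = jacobian (transition c d) (at (snd c (F p)))"
  have "G c (snd c (F p)) = transpose J ** G d (transition c d (snd c (F p))) ** J"
    using assms(1-3,6,7) unfolding lorentzian_manifold_def lorentzian_metric_def J_def by blast
  moreover have "is_chart c" using \<open>smooth_atlas A\<close> assms(2) unfolding smooth_atlas_def by blast
  ultimately have "G c (snd c (F p)) = transpose J ** G d (snd d (F p)) ** J"
    using transition_chart_eq assms(6) by metis
  then show ?thesis
    using coord_partial_transition[OF \<open>smooth_atlas A\<close> assms(2-7)] assms(8,9)
    by (simp add: J_def inner_matrix_transpose matrix_vector_mul_assoc matrix_mul_assoc)
qed

lemma coord_partial_mixed_commute:
  assumes "smooth_family_on A W F" "c \<in> A" "e \<in> Basis" "e' \<in> Basis" "p \<in> W" "F p \<in> fst c"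
  shows "coord_partial c F [e, e'] p = coord_partial c F [e', e] p"
proof -
  define U where "U = W \<inter> F -` fst c"
  have "p \<in> U" using assms(5,6) by (simp add: U_def)
  have mixed: "pd [e, e'] f p = pd [e', e] f p" if smooth: "smooth_map_on U f" for f
  proof -
    have D: "((\<lambda>t. pd bs f (y + t *\<^sub>R b)) has_real_derivative pd (b # bs) f (y + a *\<^sub>R b)) (at a)"
      if "set bs \<subseteq> Basis" "b \<in> Basis" "y + a *\<^sub>R b \<in> U" for bs b y a
      using smooth_map_on_pd_has_real_derivative[OF smooth that] .
    have D0: "((\<lambda>t. f (y + t *\<^sub>R b)) has_real_derivative pd [b] f (y + a *\<^sub>R b)) (at a)"
      if "b \<in> Basis" "y + a *\<^sub>R b \<in> U" for b y a
      using D[of "[]", OF _ that] by simp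
    have cont: "continuous (at p) (pd bs f)" if "set bs \<subseteq> Basis" for bs
      using smooth_map_on_continuous_pd[OF smooth that] smooth_map_on_open[OF smooth] \<open>p \<in> U\<close>
        continuous_on_eq_continuous_at by blast
    show ?thesis
      using assms(3,4)
      by (intro mixed_partials_commute[OF smooth_map_on_open[OF smooth] \<open>p \<in> U\<close>,
            of e' f "pd [e'] f" e "pd [e] f"] D0 D cont) auto
  qed
  have "pd [e, e'] (\<lambda>q. snd c (F q) $ k) p = pd [e', e] (\<lambda>q. snd c (F q) $ k) p" for k
    using mixed smooth_family_on_coord[OF assms(1,2)] unfolding U_def by blast
  then show ?thesis by (simp add: coord_partial_def vec_eq_iff)
qed

(* g(X, T) in the chart c; the basis vectors (1, 0) and (0, 1) of the parameter plane are
   \<partial>\<^sub>\<lambda> and \<partial>\<^sub>s. *)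
definition jacobi_pairing ::
  "('m, 'n::finite) chart \<Rightarrow> (('m, 'n) chart \<Rightarrow> real^'n \<Rightarrow> real^'n^'n) \<Rightarrow> (real \<times> real \<Rightarrow> 'm) \<Rightarrow> real \<Rightarrow> real"
  where "jacobi_pairing c G F s =
    jacobi_field_coord c F s \<bullet> (G c (snd c (F (0, s))) *v coord_partial c F [(0, 1)] (0, s))"

lemma jacobi_pairing_has_real_derivative:
  fixes c :: "('m::{t2_space, second_countable_topology}, 'n::finite) chart"
    and F :: "real \<times> real \<Rightarrow> 'm" and s :: real
  defines "x \<equiv> snd c (F (0, s))" and "X \<equiv> coord_partial c F [(1, 0)] (0, s)"
    and "T \<equiv> coord_partial c F [(0, 1)] (0, s)" and "X' \<equiv> coord_partial c F [(0, 1), (1, 0)] (0, s)"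
    and "T' \<equiv> coord_partial c F [(0, 1), (0, 1)] (0, s)"
  assumes LM: "lorentzian_manifold A G" and c: "c \<in> A" and SF: "smooth_family_on A W F"
    and W: "(0, s) \<in> W" and Fc: "F (0, s) \<in> fst c"
  shows "(jacobi_pairing c G F has_real_derivative
      X' \<bullet> (G c x *v T) + X \<bullet> (metric_derivative (G c) x T *v T) + X \<bullet> (G c x *v T')) (at s)"
proof -
  have along_s: "((\<lambda>\<sigma>. coord_partial c F bs (0, \<sigma>)) has_vector_derivative
      coord_partial c F ((0, 1) # bs) (0, s)) (at s)" if "set bs \<subseteq> Basis" for bs
    using coord_partial_has_vector_derivative[OF SF c that, of "(0, 1)" "(0, 0)" s] W Fc
    by (simp add: Basis_prod_def)
  have "coord_partial c F [] q = snd c (F q)" for q by (simp add: coord_partial_def vec_eq_iff)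
  with along_s[of "[]"] have "((\<lambda>\<sigma>. snd c (F (0, \<sigma>))) has_vector_derivative T) (at s)"
    by (simp add: T_def)
  from metric_has_vector_derivative[OF LM c _ this] have
    "((\<lambda>\<sigma>. G c (snd c (F (0, \<sigma>)))) has_vector_derivative metric_derivative (G c) x T) (at s)"
    using Fc by (simp add: x_def)
  from bilinear_form_has_real_derivative[OF along_s[of "[(1, 0)]"] this along_s[of "[(0, 1)]"]]
  show ?thesis
    unfolding jacobi_pairing_def jacobi_field_coord_def
    by (simp add: Basis_prod_def x_def X_def T_def X'_def T'_def fun_eq_iff)
qed

(* \<partial>\<^sub>\<lambda> g(T, T) = 0 at \<lambda> = 0, expanded by the product rule; dT is \<partial>\<^sub>\<lambda> T. *)
lemma null_velocity_norm_variation: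
  fixes c :: "('m::{t2_space, second_countable_topology}, 'n::finite) chart"
    and F :: "real \<times> real \<Rightarrow> 'm" and s :: real
  defines "x \<equiv> snd c (F (0, s))" and "X \<equiv> coord_partial c F [(1, 0)] (0, s)"
    and "T \<equiv> coord_partial c F [(0, 1)] (0, s)" and "dT \<equiv> coord_partial c F [(1, 0), (0, 1)] (0, s)"
  assumes LM: "lorentzian_manifold A G" and c: "c \<in> A"
    and NC: "null_connecting_family A G J I F" and JI: "J \<times> I \<subseteq> W" and SF: "smooth_family_on A W F"
    and s: "s \<in> I" and Fc: "F (0, s) \<in> fst c"
  shows "2 * (dT \<bullet> (G c x *v T)) + T \<bullet> (metric_derivative (G c) x X *v T) = 0"
proof -
  define N where "N l = coord_partial c F [(0, 1)] (l, s) \<bullet>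
      (G c (snd c (F (l, s))) *v coord_partial c F [(0, 1)] (l, s))" for l
  have "0 \<in> J" "open J" using NC unfolding null_connecting_family_def by auto
  then have "(0, s) \<in> W" using JI s by auto
  have along_l: "((\<lambda>l. coord_partial c F bs (l, s)) has_vector_derivative
      coord_partial c F ((1, 0) # bs) (0, s)) (at 0)" if "set bs \<subseteq> Basis" for bs
    using coord_partial_has_vector_derivative[OF SF c that, of "(1, 0)" "(0, s)" 0]
      \<open>(0, s) \<in> W\<close> Fc by (simp add: Basis_prod_def)
  have "coord_partial c F [] q = snd c (F q)" for q by (simp add: coord_partial_def vec_eq_iff)
  with along_l[of "[]"] have "((\<lambda>l. snd c (F (l, s))) has_vector_derivative X) (at 0)"
    by (simp add: X_def)
  from metric_has_vector_derivative[OF LM c _ this] have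
    "((\<lambda>l. G c (snd c (F (l, s)))) has_vector_derivative metric_derivative (G c) x X) (at 0)"
    using Fc by (simp add: x_def)
  from bilinear_form_has_real_derivative[OF along_l[of "[(0, 1)]"] this along_l[of "[(0, 1)]"]]
  have "(N has_real_derivative dT \<bullet> (G c x *v T) + T \<bullet> (metric_derivative (G c) x X *v T)
      + T \<bullet> (G c x *v dT)) (at 0)"
    unfolding N_def by (simp add: Basis_prod_def x_def X_def T_def dT_def)
  moreover have "(N has_real_derivative 0) (at 0)"
  proof -
    define V where "V = J \<inter> (\<lambda>l. (l, s)) -` (W \<inter> F -` fst c)"
    have "open V" unfolding V_def
      by (intro open_Int \<open>open J\<close> continuous_open_vimage
          smooth_map_on_open[OF smooth_family_on_coord[OF SF c]]) (auto intro!: continuous_intros)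
    moreover have "0 \<in> V" using \<open>0 \<in> J\<close> \<open>(0, s) \<in> W\<close> Fc by (simp add: V_def)
    moreover have "N l = 0" if "l \<in> V" for l
    proof -
      have "null_geodesic_at A G F (l, s)"
        using NC that \<open>s \<in> I\<close> unfolding null_connecting_family_def V_def by blast
      then show ?thesis using c that unfolding null_geodesic_at_def N_def V_def Let_def by blast
    qed
    ultimately show ?thesis
      by (intro has_field_derivative_transform_within_open[OF DERIV_const]) auto
  qed
  moreover have "transpose (G c x) = G c x"
    using lorentzian_manifold_metric(2)[OF LM c] Fc unfolding lorentzian_form_def x_def by blast
  then have "T \<bullet> (G c x *v dT) = dT \<bullet> (G c x *v T)" by (rule symmetric_matrix_inner_commute)
  ultimately show ?thesis using DERIV_unique by fastforce
qed

lemma jacobi_pairing_has_derivative_zero: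
  assumes LM: "lorentzian_manifold A G" and c: "c \<in> A"
    and NC: "null_connecting_family A G J I F" and "J \<times> I \<subseteq> W" and SF: "smooth_family_on A W F"
    and "s \<in> I" "F (0, s) \<in> fst c"
  shows "(jacobi_pairing c G F has_real_derivative 0) (at s)"
proof -
  define x where "x = snd c (F (0, s))"
  define X where "X = coord_partial c F [(1, 0)] (0, s)"
  define T where "T = coord_partial c F [(0, 1)] (0, s)"
  define T' where "T' = coord_partial c F [(0, 1), (0, 1)] (0, s)"
  have "0 \<in> J" using NC unfolding null_connecting_family_def by auto
  then have "(0, s) \<in> W" using assms(4,6) by auto
  have "x \<in> snd c ` fst c" using assms(7) by (simp add: x_def)
  then have "invertible (G c x)"
    using lorentzian_manifold_metric(2)[OF LM c] unfolding lorentzian_form_def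
    by (auto simp: invertible_det_nz)
  have "null_geodesic_at A G F (0, s)"
    using NC \<open>0 \<in> J\<close> \<open>s \<in> I\<close> unfolding null_connecting_family_def by blast
  then have "\<forall>k. T' $ k + (\<Sum>i\<in>UNIV. \<Sum>j\<in>UNIV. christoffel (G c) x k i j * T $ i * T $ j) = 0"
    using c assms(7) unfolding null_geodesic_at_def Let_def by (simp add: x_def T'_def T_def)
  then have geodesic: "X \<bullet> (metric_derivative (G c) x T *v T) + X \<bullet> (G c x *v T')
      = T \<bullet> (metric_derivative (G c) x X *v T) / 2"
    using \<open>invertible (G c x)\<close> metric_pd_symmetric[OF LM c \<open>x \<in> snd c ` fst c\<close>]
    by (intro geodesic_equation_pairing) auto
  have mixed: "coord_partial c F [(0, 1), (1, 0)] (0, s) = coord_partial c F [(1, 0), (0, 1)] (0, s)"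
    using coord_partial_mixed_commute[OF SF c _ _ \<open>(0, s) \<in> W\<close> assms(7)] by (simp add: Basis_prod_def)
  from null_velocity_norm_variation[OF assms] geodesic
  have "coord_partial c F [(0, 1), (1, 0)] (0, s) \<bullet> (G c x *v T)
      + X \<bullet> (metric_derivative (G c) x T *v T) + X \<bullet> (G c x *v T') = 0"
    unfolding mixed x_def X_def T_def by linarith
  with jacobi_pairing_has_real_derivative[OF LM c SF \<open>(0, s) \<in> W\<close> assms(7)] show ?thesis
    by (simp add: x_def X_def T_def T'_def)
qed

lemma lorentzian_manifold_chart_exists:
  assumes "lorentzian_manifold A G"
  shows "\<exists>c. c \<in> A \<and> y \<in> fst c"
proof -
  have "\<Union>(fst ` A) = UNIV"
    using assms unfolding lorentzian_manifold_def smooth_atlas_def by (elim conjE)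
  then show ?thesis by (metis UNIV_I UN_E)
qed

lemma jacobi_pairing_constant:
  assumes LM: "lorentzian_manifold A G" and NC: "null_connecting_family A G J I F"
    and "is_interval I" and s: "s \<in> I" "c \<in> A" "F (0, s) \<in> fst c"
    and s': "s' \<in> I" "c' \<in> A" "F (0, s') \<in> fst c'"
  shows "jacobi_pairing c G F s = jacobi_pairing c' G F s'"
proof -
  obtain W where JI: "J \<times> I \<subseteq> W" and SF: "smooth_family_on A W F"
    using NC unfolding null_connecting_family_def by blast
  have "0 \<in> J" using NC unfolding null_connecting_family_def by blast
  define chart where "chart \<sigma> = (SOME c. c \<in> A \<and> F (0, \<sigma>) \<in> fst c)" for \<sigma>
  have chart: "chart \<sigma> \<in> A" "F (0, \<sigma>) \<in> fst (chart \<sigma>)" for \<sigma>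
    using someI_ex[OF lorentzian_manifold_chart_exists[OF LM, of "F (0, \<sigma>)"]]
    by (simp_all add: chart_def)
  define q where "q \<sigma> = jacobi_pairing (chart \<sigma>) G F \<sigma>" for \<sigma>
  have q: "jacobi_pairing c G F \<sigma> = q \<sigma>" if "(0, \<sigma>) \<in> W" "c \<in> A" "F (0, \<sigma>) \<in> fst c" for c \<sigma>
    using metric_pairing_chart_independent[OF LM that(2) chart(1) SF that(1,3) chart(2),
        of "(1, 0)" "(0, 1)"]
    unfolding q_def jacobi_pairing_def jacobi_field_coord_def by (simp add: Basis_prod_def)
  have deriv: "(q has_real_derivative 0) (at \<sigma>)" if "\<sigma> \<in> I" for \<sigma>
  proof (rule has_field_derivative_transform_within_open)
    show "(jacobi_pairing (chart \<sigma>) G F has_real_derivative 0) (at \<sigma>)"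
      using jacobi_pairing_has_derivative_zero[OF LM chart(1) NC JI SF that chart(2)] .
    show "open ((\<lambda>\<sigma>. (0, \<sigma>)) -` (W \<inter> F -` fst (chart \<sigma>)))"
      by (intro continuous_open_vimage smooth_map_on_open[OF smooth_family_on_coord[OF SF chart(1)]])
        (auto intro!: continuous_intros)
    show "\<sigma> \<in> (\<lambda>\<sigma>. (0, \<sigma>)) -` (W \<inter> F -` fst (chart \<sigma>))" using JI \<open>0 \<in> J\<close> that chart(2) by auto
  qed (auto intro: q chart(1))
  have deriv_within: "(q has_real_derivative 0) (at \<sigma> within I)" if "\<sigma> \<in> I" for \<sigma>
    using deriv[OF that] by (rule has_field_derivative_at_within)
  have "convex I" using \<open>is_interval I\<close> by (rule is_interval_convex)
  from has_field_derivative_zero_constant[OF this deriv_within] obtain K where K: "\<forall>\<sigma>\<in>I. q \<sigma> = K"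
    by blast
  have "(0, s) \<in> W" "(0, s') \<in> W" using JI \<open>0 \<in> J\<close> s(1) s'(1) by auto
  then show ?thesis using q[OF _ s(2,3)] q[OF _ s'(2,3)] K s(1) s'(1) by simp
qed

theorem proposition1:
  fixes A :: "('m::{t2_space, second_countable_topology}, 'n::finite) chart set"
    and G :: "('m, 'n) chart \<Rightarrow> real^'n \<Rightarrow> real^'n^'n"
    and F :: "real \<times> real \<Rightarrow> 'm"
    and J I :: "real set"
  assumes "lorentzian_manifold A G"
    and "is_interval I" and "0 \<in> I"
    and "null_connecting_family A G J I F"
    and "\<forall>c\<in>A. F (0, 0) \<in> fst c \<longrightarrow>
           jacobi_field_coord c F 0 \<bullet> (G c (snd c (F (0, 0))) *v jacobi_field_coord c F 0) < 0"
  shows "\<forall>s\<in>I. \<forall>c\<in>A. F (0, s) \<in> fst c \<longrightarrow> jacobi_field_coord c F s \<noteq> 0"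
proof (intro ballI impI notI)
  fix s c assume s: "s \<in> I" "c \<in> A" "F (0, s) \<in> fst c" and "jacobi_field_coord c F s = 0"
  then have "jacobi_pairing c G F s = 0" by (simp add: jacobi_pairing_def)
  obtain d where d: "d \<in> A" "F (0, 0) \<in> fst d"
    using lorentzian_manifold_chart_exists[OF assms(1)] by blast
  have "null_geodesic_at A G F (0, 0)"
    using assms(3,4) unfolding null_connecting_family_def by blast
  then have T: "coord_partial d F [(0, 1)] (0, 0) \<bullet>
      (G d (snd d (F (0, 0))) *v coord_partial d F [(0, 1)] (0, 0)) = 0"
      "coord_partial d F [(0, 1)] (0, 0) \<noteq> 0"
    using d unfolding null_geodesic_at_def Let_def by blast+
  have "lorentzian_form (G d (snd d (F (0, 0))))"
    using lorentzian_manifold_metric(2)[OF assms(1) d(1)] d(2) by blast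
  from lorentzian_form_timelike_not_orthogonal_null[OF this _ T] assms(5) d
  have "jacobi_pairing d G F 0 \<noteq> 0" by (simp add: jacobi_pairing_def)
  with \<open>jacobi_pairing c G F s = 0\<close> show False
    using jacobi_pairing_constant[OF assms(1,4,2) s assms(3) d] by simp
qed

end
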